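(* In the setting of Problem A with $m>0$ and $0<\underline\theta<\overline\theta$, let $z\in\mathcal H_0$ and $w\in\mathcal H$ with $w\notin(A+B+C+D)(Gz)$. Then the bracketing/bisection procedure (see context), started from any $\rho^0>0$, terminates after finitely many steps and returns $(\rho,x,y)$ with $\rho>0$ and $x\in\mathcal H$ satisfying (5.3)–(5.4), and $y=(Gz-x)/\rho+w+[B(x)-B(Gz)]+[D(x)-D_{(Gz)}(x)]$.
   Context: Problem A setting: $\mathcal H_0,\mathcal H$ real Hilbert spaces; $A:\mathcal H\rightrightarrows\mathcal H$ maximal monotone; $B:\mathcal H\to\mathcal H$ monotone and $\ell$-Lipschitz ($\ell\ge0$); $C:\mathcal H\to\mathcal H$ $\beta$-cocoercive with $\beta\in(0,\infty]$, i.e. $\langle x-y,Cx-Cy\rangle\ge\beta\|Cx-Cy\|^2$ (with $1/\infty=0$); $D:\mathcal H\to\mathcal H$ monotone and continuously differentiable with $m$-Lipschitz derivative $D'$; $G:\mathcal H_0\to\mathcal H$ bounded linear. For $u\in\mathcal H$, $D_{(u)}(x):=D(u)+D'(u)(x-u)$. For a maximal monotone $S$, $J_S:=(S+I)^{-1}$. Given $\hat\delta>0$ and $0<\underline\theta<\overline\theta$, Problem A asks, for given $z\in\mathcal H_0$, $w\in\mathcal H$, for $\rho>0$ and $x\in\mathcal H$ with (5.3) $x=J_{\rho(A+D_{(Gz)})}\big(Gz+\rho w-\rho(B+C)(Gz)\big)$ and (5.4) $\underline\theta\le4\ell^2\rho^2+(\beta^{-1}+\hat\delta)\rho+(m\rho\|x-Gz\|)^2\le\overline\theta$.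 Bracketing/bisection procedure: for $\rho>0$ let $x(\rho):=J_{\rho(A+D_{(Gz)})}\big(Gz+\rho w-\rho(B+C)(Gz)\big)$ and $q(\rho):=4\ell^2\rho^2+(\beta^{-1}+\hat\delta)\rho+(m\rho\|x(\rho)-Gz\|)^2$. Given $\rho^0>0$: if $\underline\theta\le q(\rho^0)\le\overline\theta$, return $\rho=\rho^0$. If $q(\rho^0)<\underline\theta$, set $t_-=\rho^0$, $t_+=\rho^0\overline\theta/q(\rho^0)$; if $q(\rho^0)>\overline\theta$, set $t_-=\rho^0\underline\theta/q(\rho^0)$, $t_+=\rho^0$. Then repeat: set $\tilde\rho=\sqrt{t_-t_+}$; if $\underline\theta\le q(\tilde\rho)\le\overline\theta$, return $\rho=\tilde\rho$; if $q(\tilde\rho)>\overline\theta$ set $t_+=\tilde\rho$; if $q(\tilde\rho)<\underline\theta$ set $t_-=\tilde\rho$. On return with $\rho$, output $x=x(\rho)$ and $y=(Gz-x)/\rho+w+[B(x)-B(Gz)]+[D(x)-D_{(Gz)}(x)]$. *)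

theory Defs
  imports "HOL-Analysis.Analysis"
begin

definition monotone_op :: "('b::real_inner \<Rightarrow> 'b set) \<Rightarrow> bool" where
  "monotone_op S \<longleftrightarrow> (\<forall>x y u v. u \<in> S x \<longrightarrow> v \<in> S y \<longrightarrow> 0 \<le> inner (x - y) (u - v))"

definition maximal_monotone :: "('b::real_inner \<Rightarrow> 'b set) \<Rightarrow> bool" where
  "maximal_monotone S \<longleftrightarrow> monotone_op S \<and>
     (\<forall>x u. (\<forall>y v. v \<in> S y \<longrightarrow> 0 \<le> inner (x - y) (u - v)) \<longrightarrow> u \<in> S x)"

text \<open>Resolvent \<open>J_S = (S + I)^{-1}\<close>, evaluated at v (single-valued for maximal monotone S).\<close>
definition resolvent :: "('b::real_inner \<Rightarrow> 'b set) \<Rightarrow> 'b \<Rightarrow> 'b" where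
  "resolvent S v = (THE x. v - x \<in> S x)"

definition linearize :: "('b::real_normed_vector \<Rightarrow> 'b) \<Rightarrow> ('b \<Rightarrow> 'b \<Rightarrow>\<^sub>L 'b) \<Rightarrow> 'b \<Rightarrow> 'b \<Rightarrow> 'b" where
  "linearize D D' u x = D u + blinfun_apply (D' u) (x - u)"

definition scaled_sum_op :: "real \<Rightarrow> ('b::real_inner \<Rightarrow> 'b set) \<Rightarrow> ('b \<Rightarrow> 'b) \<Rightarrow> 'b \<Rightarrow> 'b set" where
  "scaled_sum_op \<rho> A L x = {\<rho> *\<^sub>R (a + L x) | a. a \<in> A x}"

definition xfun :: "('b::real_inner \<Rightarrow> 'b set) \<Rightarrow> ('b \<Rightarrow> 'b) \<Rightarrow> ('b \<Rightarrow> 'b) \<Rightarrow> ('b \<Rightarrow> 'b)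
   \<Rightarrow> ('b \<Rightarrow> 'b \<Rightarrow>\<^sub>L 'b) \<Rightarrow> ('a \<Rightarrow> 'b) \<Rightarrow> 'a \<Rightarrow> 'b \<Rightarrow> real \<Rightarrow> 'b" where
  "xfun A B C D D' G z w \<rho> =
     resolvent (scaled_sum_op \<rho> A (linearize D D' (G z)))
       (G z + \<rho> *\<^sub>R w - \<rho> *\<^sub>R (B (G z) + C (G z)))"

text \<open>\<open>q(\<rho>) = 4 \<ell>^2 \<rho>^2 + (\<beta>^{-1} + \<hat>\<delta>) \<rho> + (m \<rho> \<parallel>x(\<rho>) - Gz\<parallel>)^2\<close>;
  the parameter \<open>binv\<close> stands for \<open>\<beta>^{-1}\<close> (with \<open>1/\<infinity> = 0\<close>).\<close>
definition qfun :: "real \<Rightarrow> real \<Rightarrow> real \<Rightarrow> real \<Rightarrow> ('b::real_inner) \<Rightarrow> (real \<Rightarrow> 'b) \<Rightarrow> real \<Rightarrow> real" where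
  "qfun l binv dhat m Gz xf \<rho> =
     4 * l^2 * \<rho>^2 + (binv + dhat) * \<rho> + (m * \<rho> * norm (xf \<rho> - Gz))^2"

definition in_band :: "(real \<Rightarrow> real) \<Rightarrow> real \<Rightarrow> real \<Rightarrow> real \<Rightarrow> bool" where
  "in_band q lo hi \<rho> \<longleftrightarrow> lo \<le> q \<rho> \<and> q \<rho> \<le> hi"

text \<open>Initial bracket (used only when \<open>\<rho>0\<close> is not in the band).\<close>
definition bis_init :: "(real \<Rightarrow> real) \<Rightarrow> real \<Rightarrow> real \<Rightarrow> real \<Rightarrow> real \<times> real" where
  "bis_init q lo hi \<rho>0 =
     (if q \<rho>0 < lo then (\<rho>0, \<rho>0 * hi / q \<rho>0) else (\<rho>0 * lo / q \<rho>0, \<rho>0))"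

definition bis_mid :: "real \<times> real \<Rightarrow> real" where
  "bis_mid t = sqrt (fst t * snd t)"

text \<open>One update of the bracket (only applied when the midpoint is not in the band).\<close>
definition bis_step :: "(real \<Rightarrow> real) \<Rightarrow> real \<Rightarrow> real \<Rightarrow> real \<times> real \<Rightarrow> real \<times> real" where
  "bis_step q lo hi t =
     (let r = bis_mid t in
      if hi < q r then (fst t, r) else if q r < lo then (r, snd t) else t)"

definition bis_iter :: "(real \<Rightarrow> real) \<Rightarrow> real \<Rightarrow> real \<Rightarrow> real \<Rightarrow> nat \<Rightarrow> real \<times> real" where
  "bis_iter q lo hi \<rho>0 n = (bis_step q lo hi ^^ n) (bis_init q lo hi \<rho>0)"

definition bisection_returns :: "(real \<Rightarrow> real) \<Rightarrow> real \<Rightarrow> real \<Rightarrow> real \<Rightarrow> real \<Rightarrow> bool" where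
  "bisection_returns q lo hi \<rho>0 \<rho> \<longleftrightarrow>
     (in_band q lo hi \<rho>0 \<and> \<rho> = \<rho>0) \<or>
     (\<not> in_band q lo hi \<rho>0 \<and>
      (\<exists>n. (\<forall>k<n. \<not> in_band q lo hi (bis_mid (bis_iter q lo hi \<rho>0 k))) \<and>
           in_band q lo hi (bis_mid (bis_iter q lo hi \<rho>0 n)) \<and>
           \<rho> = bis_mid (bis_iter q lo hi \<rho>0 n)))"

end

theory Submission
  imports Defs
begin

(* Maximal monotonicity enters only through Minty's theorem, proved here directly: for a
   monotone set M of pairs (y, b), the function minty_gap is nonpositive on the convex hull of
   the triples (y, b, <y, b>) and uniformly concave in the direction y - b, so a maximizing
   sequence converges to a point x with <x - y, x + b> <= 0 on M.  A Banach fixed-point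
   argument then solves the resolvent equation for A plus the monotone affine map D_(Gz), so
   x(rho) is characterized by its inclusion.

   Comparing the inclusions at two parameters shows that rho |-> norm (x(rho) - Gz) is
   nondecreasing and that x is continuous; hence q is continuous and positive and q(rho)/rho is
   nondecreasing.  The latter makes the initial bracket valid, every geometric-mean step halves
   ln t_+ - ln t_-, and uniform continuity of q on the initial bracket forces some midpoint into
   the band. *)

section \<open>Minty's theorem\<close>

lemma convex_hull_monotone_graph_inner_le:
  fixes P :: "('b::real_inner \<times> 'b \<times> real) set"
  assumes graph: "\<And>v. v \<in> P \<Longrightarrow> snd (snd v) = inner (fst v) (fst (snd v))"
    and mono: "\<And>v v'. v \<in> P \<Longrightarrow> v' \<in> P \<Longrightarrow> 0 \<le> inner (fst v - fst v') (fst (snd v) - fst (snd v'))"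
    and p: "p \<in> convex hull P"
  shows "inner (fst p) (fst (snd p)) \<le> snd (snd p)"
proof -
  obtain F c where F: "finite F" "F \<subseteq> P"
    and c: "\<forall>v\<in>F. 0 \<le> c v" "sum c F = 1" and p_eq: "(\<Sum>v\<in>F. c v *\<^sub>R v) = p"
    using p unfolding convex_hull_explicit by blast
  define y where "y v = fst v" for v :: "'b \<times> 'b \<times> real"
  define b where "b v = fst (snd v)" for v :: "'b \<times> 'b \<times> real"
  have p_parts: "fst p = (\<Sum>v\<in>F. c v *\<^sub>R y v)" "fst (snd p) = (\<Sum>v\<in>F. c v *\<^sub>R b v)"
      "snd (snd p) = (\<Sum>v\<in>F. c v * inner (y v) (b v))"
    using F(2) graph unfolding p_eq[symmetric] y_def b_def by (auto simp: fst_sum snd_sum intro!: sum.cong)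
  have "0 \<le> (\<Sum>v\<in>F. \<Sum>v'\<in>F. c v * c v' * inner (y v - y v') (b v - b v'))"
    using c F(2) by (intro sum_nonneg mult_nonneg_nonneg) (auto simp: y_def b_def intro!: mono)
  also have "\<dots> = 2 * (\<Sum>v\<in>F. c v * inner (y v) (b v))
      - 2 * inner (\<Sum>v\<in>F. c v *\<^sub>R y v) (\<Sum>v\<in>F. c v *\<^sub>R b v)"
  proof -
    have diag: "(\<Sum>v\<in>F. \<Sum>v'\<in>F. c v * c v' * inner (y v) (b v)) = (\<Sum>v\<in>F. c v * inner (y v) (b v))"
      by (simp add: sum_distrib_right[symmetric] sum_distrib_left[symmetric] c(2) mult.commute)
    have diag': "(\<Sum>v\<in>F. \<Sum>v'\<in>F. c v * c v' * inner (y v') (b v')) = (\<Sum>v\<in>F. c v * inner (y v) (b v))"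
      by (subst sum.swap) (simp add: diag mult.commute)
    have cross: "(\<Sum>v\<in>F. \<Sum>v'\<in>F. c v * c v' * inner (y v') (b v))
        = inner (\<Sum>v\<in>F. c v *\<^sub>R y v) (\<Sum>v\<in>F. c v *\<^sub>R b v)"
      by (simp add: inner_sum_left inner_sum_right sum_distrib_left mult.assoc)
    have cross': "(\<Sum>v\<in>F. \<Sum>v'\<in>F. c v * c v' * inner (y v) (b v'))
        = inner (\<Sum>v\<in>F. c v *\<^sub>R y v) (\<Sum>v\<in>F. c v *\<^sub>R b v)"
      unfolding cross[symmetric] by (subst sum.swap) (simp add: mult_ac)
    have "(\<Sum>v\<in>F. \<Sum>v'\<in>F. c v * c v' * inner (y v - y v') (b v - b v'))
        = (\<Sum>v\<in>F. \<Sum>v'\<in>F. c v * c v' * inner (y v) (b v))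
        + (\<Sum>v\<in>F. \<Sum>v'\<in>F. c v * c v' * inner (y v') (b v'))
        - (\<Sum>v\<in>F. \<Sum>v'\<in>F. c v * c v' * inner (y v) (b v'))
        - (\<Sum>v\<in>F. \<Sum>v'\<in>F. c v * c v' * inner (y v') (b v))"
      by (simp add: algebra_simps sum.distrib sum_subtractf)
    then show ?thesis unfolding diag diag' cross cross' by simp
  qed
  finally show ?thesis unfolding p_parts by simp
qed

(* Maximized over the convex hull of the graph triples (y, b, <y, b>); uniform concavity in
   y - b makes (y - b)/2 converge along a maximizing sequence, to the Minty point. *)
definition minty_gap :: "'b::real_inner \<times> 'b \<times> real \<Rightarrow> real" where
  "minty_gap p = - (norm (fst p - fst (snd p)))\<^sup>2 / 4 - snd (snd p)"

lemma minty_gap_convex_hull_nonpos: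
  fixes M :: "('b::real_inner \<times> 'b) set"
  assumes mono: "\<And>y b y' b'. (y, b) \<in> M \<Longrightarrow> (y', b') \<in> M \<Longrightarrow> 0 \<le> inner (y - y') (b - b')"
    and p: "p \<in> convex hull {(y, b, inner y b) | y b. (y, b) \<in> M}"
  shows "minty_gap p \<le> 0"
proof -
  have "inner (fst p) (fst (snd p)) \<le> snd (snd p)"
    by (rule convex_hull_monotone_graph_inner_le[OF _ _ p]) (auto intro: mono)
  moreover have "(norm (fst p - fst (snd p)))\<^sup>2 + 4 * inner (fst p) (fst (snd p))
      = (norm (fst p + fst (snd p)))\<^sup>2"
    unfolding power2_norm_eq_inner by (simp add: algebra_simps inner_commute)
  moreover have "0 \<le> (norm (fst p + fst (snd p)))\<^sup>2" by simp
  ultimately show ?thesis unfolding minty_gap_def by argo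
qed

lemma minty_gap_segment:
  fixes p :: "'b::real_inner \<times> 'b \<times> real"
  defines "\<xi> \<equiv> (1/2) *\<^sub>R (fst p - fst (snd p))"
  shows "minty_gap ((1 - t) *\<^sub>R p + t *\<^sub>R (y, b, inner y b)) =
    (1 - t) * minty_gap p + t * inner (\<xi> - y) (\<xi> + b) - t\<^sup>2 * (norm (2 *\<^sub>R \<xi> + b - y))\<^sup>2 / 4"
proof -
  obtain Y B s where p: "p = (Y, B, s)" by (cases p) auto
  show ?thesis unfolding p \<xi>_def minty_gap_def power2_norm_eq_inner
    by (simp add: inner_add_left inner_add_right inner_diff_left inner_diff_right
        power2_eq_square algebra_simps inner_commute) (simp add: field_simps)
qed

lemma minty_gap_midpoint:
  fixes p p' :: "'b::real_inner \<times> 'b \<times> real"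
  shows "minty_gap ((1/2) *\<^sub>R p + (1/2) *\<^sub>R p') = (minty_gap p + minty_gap p') / 2
    + (norm ((fst p - fst (snd p)) - (fst p' - fst (snd p'))))\<^sup>2 / 16"
proof -
  obtain Y B s where p: "p = (Y, B, s)" by (cases p) auto
  obtain Y' B' s' where p': "p' = (Y', B', s')" by (cases p') auto
  show ?thesis unfolding p p' minty_gap_def power2_norm_eq_inner
    by (simp add: inner_add_left inner_add_right inner_diff_left inner_diff_right
        power2_eq_square algebra_simps inner_commute) (simp add: field_simps)
qed

lemma minty_gap_maximizing_Cauchy:
  fixes p :: "nat \<Rightarrow> 'b::real_inner \<times> 'b \<times> real"
  assumes K: "convex K" and S: "\<And>p. p \<in> K \<Longrightarrow> minty_gap p \<le> S"
    and pK: "\<And>n. p n \<in> K" and p_max: "\<And>n. S - e n < minty_gap (p n)" and e: "e \<longlonglongrightarrow> 0"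
  shows "Cauchy (\<lambda>n. (1/2) *\<^sub>R (fst (p n) - fst (snd (p n))))" (is "Cauchy ?\<xi>")
proof (rule CauchyI)
  have dist_bound: "(norm (?\<xi> n - ?\<xi> n'))\<^sup>2 \<le> 2 * (e n + e n')" for n n'
  proof -
    define \<delta> where "\<delta> = (fst (p n) - fst (snd (p n))) - (fst (p n') - fst (snd (p n')))"
    have "(1/2) *\<^sub>R p n + (1/2) *\<^sub>R p n' \<in> K" using K pK by (intro convexD) auto
    then have "minty_gap ((1/2) *\<^sub>R p n + (1/2) *\<^sub>R p n') \<le> S" by (rule S)
    then have "(norm \<delta>)\<^sup>2 / 16 \<le> S - (minty_gap (p n) + minty_gap (p n')) / 2"
      unfolding minty_gap_midpoint \<delta>_def by linarith
    moreover have "(norm (?\<xi> n - ?\<xi> n'))\<^sup>2 = (norm \<delta>)\<^sup>2 / 4"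
    proof -
      have "?\<xi> n - ?\<xi> n' = (1/2) *\<^sub>R \<delta>" unfolding \<delta>_def by (simp add: algebra_simps)
      then show ?thesis by (simp add: power_divide)
    qed
    ultimately show ?thesis using p_max[of n] p_max[of n'] by argo
  qed
  fix r :: real assume r: "0 < r"
  then obtain N where N: "\<And>n. N \<le> n \<Longrightarrow> e n < r\<^sup>2 / 4"
    using order_tendstoD(2)[OF e, of "r\<^sup>2 / 4"] by (auto simp: eventually_sequentially)
  have "norm (?\<xi> n - ?\<xi> n') < r" if "N \<le> n" "N \<le> n'" for n n'
  proof -
    have "(norm (?\<xi> n - ?\<xi> n'))\<^sup>2 < r\<^sup>2" using dist_bound[of n n'] N[OF that(1)] N[OF that(2)] by argo
    then show ?thesis using r by (simp add: power_less_imp_less_base)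
  qed
  then show "\<exists>N. \<forall>n\<ge>N. \<forall>n'\<ge>N. norm (?\<xi> n - ?\<xi> n') < r" by blast
qed

lemma minty_gap_limit_le:
  fixes p :: "nat \<Rightarrow> 'b::real_inner \<times> 'b \<times> real"
  assumes K: "convex K" and S: "\<And>p. p \<in> K \<Longrightarrow> minty_gap p \<le> S"
    and pK: "\<And>n. p n \<in> K" and p_max: "\<And>n. S - e n < minty_gap (p n)" and e: "e \<longlonglongrightarrow> 0"
    and lim: "(\<lambda>n. (1/2) *\<^sub>R (fst (p n) - fst (snd (p n)))) \<longlonglongrightarrow> x" (is "?\<xi> \<longlonglongrightarrow> x")
    and yb: "(y, b, inner y b) \<in> K"
  shows "inner (x - y) (x + b) \<le> S"
proof -
  define c where "c = (norm (2 *\<^sub>R x + b - y))\<^sup>2 / 4"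
  have approx: "inner (x - y) (x + b) \<le> S + t * c" if t: "0 < t" "t \<le> 1" for t
  proof -
    have bound: "t * inner (?\<xi> n - y) (?\<xi> n + b)
        \<le> t * S + e n + t\<^sup>2 * ((norm (2 *\<^sub>R ?\<xi> n + b - y))\<^sup>2 / 4)" for n
    proof -
      have mem: "(1 - t) *\<^sub>R p n + t *\<^sub>R (y, b, inner y b) \<in> K"
        using K pK yb t by (intro convexD) auto
      have "(1 - t) * minty_gap (p n) + t * inner (?\<xi> n - y) (?\<xi> n + b)
          - t\<^sup>2 * (norm (2 *\<^sub>R ?\<xi> n + b - y))\<^sup>2 / 4 \<le> S"
        using S[OF mem] by (simp only: minty_gap_segment)
      moreover have "(1 - t) * (S - e n) \<le> (1 - t) * minty_gap (p n)"
        using p_max[of n] t by (intro mult_left_mono) auto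
      moreover have "0 \<le> e n" using p_max[of n] S[OF pK[of n]] by linarith
      then have "(1 - t) * e n \<le> e n" using t by (simp add: mult_left_le_one_le)
      ultimately show ?thesis by (simp add: algebra_simps)
    qed
    have lim_lhs: "(\<lambda>n. t * inner (?\<xi> n - y) (?\<xi> n + b)) \<longlonglongrightarrow> t * inner (x - y) (x + b)"
      by (intro tendsto_intros lim)
    have lim_rhs: "(\<lambda>n. t * S + e n + t\<^sup>2 * ((norm (2 *\<^sub>R ?\<xi> n + b - y))\<^sup>2 / 4)) \<longlonglongrightarrow> t * S + 0 + t\<^sup>2 * c"
      unfolding c_def by (intro tendsto_intros lim e) auto
    have "t * inner (x - y) (x + b) \<le> t * S + 0 + t\<^sup>2 * c"
      using LIMSEQ_le[OF lim_lhs lim_rhs] bound by blast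
    then have "t * inner (x - y) (x + b) \<le> t * (S + t * c)"
      by (simp add: power2_eq_square algebra_simps)
    then show ?thesis using t by simp
  qed
  have "((\<lambda>t. S + t * c) \<longlongrightarrow> S + 0 * c) (at_right 0)"
    by (intro tendsto_intros)
  moreover have "\<forall>\<^sub>F t in at_right 0. inner (x - y) (x + b) \<le> S + t * c"
    unfolding eventually_at_right_field by (intro exI[of _ 1]) (auto intro: approx)
  ultimately show ?thesis by (simp add: tendsto_lowerbound)
qed

lemma monotone_set_minty:
  fixes M :: "('b::{real_inner, complete_space} \<times> 'b) set"
  assumes mono: "\<And>y b y' b'. (y, b) \<in> M \<Longrightarrow> (y', b') \<in> M \<Longrightarrow> 0 \<le> inner (y - y') (b - b')"
  shows "\<exists>x. \<forall>(y, b)\<in>M. inner (x - y) (x + b) \<le> 0"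
proof (cases "M = {}")
  case False
  define K where "K = convex hull {(y, b, inner y b) | y b. (y, b) \<in> M}"
  have K_nonpos: "\<And>p. p \<in> K \<Longrightarrow> minty_gap p \<le> 0"
    unfolding K_def by (rule minty_gap_convex_hull_nonpos[OF mono])
  have graph_K: "(y, b, inner y b) \<in> K" if "(y, b) \<in> M" for y b
    unfolding K_def using that by (intro hull_inc) blast
  then have "K \<noteq> {}" using False by auto
  define S where "S = Sup (minty_gap ` K)"
  have bdd: "bdd_above (minty_gap ` K)" using K_nonpos by (intro bdd_aboveI[of _ 0]) auto
  have S: "\<And>p. p \<in> K \<Longrightarrow> minty_gap p \<le> S"
    unfolding S_def using bdd by (auto intro: cSup_upper)
  have "S \<le> 0" unfolding S_def using \<open>K \<noteq> {}\<close> K_nonpos by (auto intro: cSup_least)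
  define e where "e n = 1 / (real n + 1)" for n
  have "\<exists>p\<in>K. S - e n < minty_gap p" for n
    using less_cSup_iff[OF _ bdd, of "S - e n"] \<open>K \<noteq> {}\<close> unfolding S_def e_def by auto
  then obtain p where pK: "\<And>n. p n \<in> K" and p_max: "\<And>n. S - e n < minty_gap (p n)" by metis
  have e: "e \<longlonglongrightarrow> 0" unfolding e_def using LIMSEQ_inverse_real_of_nat_add[of 0]
    by (simp add: inverse_eq_divide add.commute)
  have "convex K" unfolding K_def by simp
  from minty_gap_maximizing_Cauchy[OF this S pK p_max e]
  obtain x where x: "(\<lambda>n. (1/2) *\<^sub>R (fst (p n) - fst (snd (p n)))) \<longlonglongrightarrow> x"
    using Cauchy_convergent_iff convergent_def by blast
  have "inner (x - y) (x + b) \<le> S" if "(y, b) \<in> M" for y b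
    by (rule minty_gap_limit_le[OF \<open>convex K\<close> S pK p_max e x graph_K[OF that]])
  then have "\<forall>(y, b)\<in>M. inner (x - y) (x + b) \<le> 0" using \<open>S \<le> 0\<close> by (auto intro: order_trans)
  then show ?thesis by blast
qed simp

lemma maximal_monotone_minty:
  fixes A :: "'b::{real_inner, complete_space} \<Rightarrow> 'b set"
  assumes A: "maximal_monotone A" and \<mu>: "0 < \<mu>"
  shows "\<exists>x. (1/\<mu>) *\<^sub>R (w - x) \<in> A x"
proof -
  define M where "M = {(y, \<mu> *\<^sub>R a - w) | y a. a \<in> A y}"
  have M_iff: "(y, b) \<in> M \<longleftrightarrow> (\<exists>a\<in>A y. b = \<mu> *\<^sub>R a - w)" for y b
    unfolding M_def by auto
  have "0 \<le> inner (y - y') (b - b')" if "(y, b) \<in> M" "(y', b') \<in> M" for y b y' b'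
  proof -
    from that obtain a a' where "a \<in> A y" "a' \<in> A y'" "b = \<mu> *\<^sub>R a - w" "b' = \<mu> *\<^sub>R a' - w"
      unfolding M_iff by blast
    moreover have "monotone_op A" using A unfolding maximal_monotone_def by simp
    ultimately show ?thesis
      using \<mu> unfolding monotone_op_def by (simp add: inner_diff_right flip: scaleR_diff_right)
  qed
  then obtain x where x: "\<forall>(y, b)\<in>M. inner (x - y) (x + b) \<le> 0"
    using monotone_set_minty by blast
  have "0 \<le> inner (x - y) ((1/\<mu>) *\<^sub>R (w - x) - a)" if "a \<in> A y" for y a
  proof -
    have "(y, \<mu> *\<^sub>R a - w) \<in> M" unfolding M_iff using that by blast
    then have "inner (x - y) (x + (\<mu> *\<^sub>R a - w)) \<le> 0" using x by auto
    moreover have "(1/\<mu>) *\<^sub>R (w - x) - a = - (1/\<mu>) *\<^sub>R (x + (\<mu> *\<^sub>R a - w))"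
      using \<mu> by (simp add: algebra_simps)
    ultimately show ?thesis using \<mu> by (simp add: divide_nonpos_pos)
  qed
  then show ?thesis using A unfolding maximal_monotone_def by blast
qed

section \<open>Resolvents of a maximal monotone operator plus a monotone affine map\<close>

lemma monotone_op_resolvent_nonexpansive:
  fixes A :: "'b::real_inner \<Rightarrow> 'b set"
  assumes A: "monotone_op A" and \<mu>: "0 < \<mu>"
    and x1: "(1/\<mu>) *\<^sub>R (w1 - x1) \<in> A x1" and x2: "(1/\<mu>) *\<^sub>R (w2 - x2) \<in> A x2"
  shows "norm (x1 - x2) \<le> norm (w1 - w2)"
proof -
  have "0 \<le> inner (x1 - x2) ((1/\<mu>) *\<^sub>R (w1 - x1) - (1/\<mu>) *\<^sub>R (w2 - x2))"
    using A x1 x2 unfolding monotone_op_def by blast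
  also have "\<dots> = (1/\<mu>) * (inner (x1 - x2) (w1 - w2) - inner (x1 - x2) (x1 - x2))"
    by (simp add: algebra_simps flip: scaleR_diff_right)
  finally have "(norm (x1 - x2))\<^sup>2 \<le> inner (x1 - x2) (w1 - w2)"
    using \<mu> by (simp add: zero_le_divide_iff power2_norm_eq_inner)
  also have "\<dots> \<le> norm (x1 - x2) * norm (w1 - w2)" by (rule norm_cauchy_schwarz)
  finally have "norm (x1 - x2) * norm (x1 - x2) \<le> norm (x1 - x2) * norm (w1 - w2)"
    by (simp add: power2_eq_square)
  then show ?thesis by (cases "norm (x1 - x2) = 0") (auto simp: mult_le_cancel_left)
qed

lemma monotone_blinfun_damped_step_norm_le:
  fixes T :: "'b::real_inner \<Rightarrow>\<^sub>L 'b"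
  assumes T: "\<forall>h. 0 \<le> inner h (T h)" and \<rho>: "0 < \<rho>"
    and \<gamma>: "\<gamma> = 1 / (1 + \<rho>\<^sup>2 * (norm T)\<^sup>2)"
  shows "norm ((1 - \<gamma>) *\<^sub>R h - (\<gamma> * \<rho>) *\<^sub>R T h) \<le> sqrt (1 - \<gamma>) * norm h"
proof -
  define d where "d = 1 + \<rho>\<^sup>2 * (norm T)\<^sup>2"
  have d: "1 \<le> d" "\<gamma> = 1 / d" unfolding d_def \<gamma> by simp_all
  then have \<gamma>_bounds: "0 < \<gamma>" "\<gamma> \<le> 1" by auto
  have "\<gamma> * d = 1" using d by simp
  then have \<gamma>_T: "\<gamma> * (\<rho>\<^sup>2 * (norm T)\<^sup>2) = 1 - \<gamma>" unfolding d_def by (simp add: algebra_simps)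
  have "(norm (T h))\<^sup>2 \<le> (norm T)\<^sup>2 * (norm h)\<^sup>2"
    by (metis norm_blinfun norm_ge_zero power_mono power_mult_distrib)
  then have "(\<gamma> * \<rho>)\<^sup>2 * (norm (T h))\<^sup>2 \<le> (\<gamma> * \<rho>)\<^sup>2 * ((norm T)\<^sup>2 * (norm h)\<^sup>2)"
    by (rule mult_left_mono) simp
  moreover have "0 \<le> ((1 - \<gamma>) * (\<gamma> * \<rho>)) * inner h (T h)"
    using \<gamma>_bounds \<rho> T by simp
  moreover have "(norm ((1 - \<gamma>) *\<^sub>R h - (\<gamma> * \<rho>) *\<^sub>R T h))\<^sup>2
      = (1 - \<gamma>)\<^sup>2 * (norm h)\<^sup>2 - 2 * ((1 - \<gamma>) * (\<gamma> * \<rho>)) * inner h (T h)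
        + (\<gamma> * \<rho>)\<^sup>2 * (norm (T h))\<^sup>2"
    unfolding power2_norm_eq_inner by (simp add: inner_commute power2_eq_square algebra_simps)
  ultimately have "(norm ((1 - \<gamma>) *\<^sub>R h - (\<gamma> * \<rho>) *\<^sub>R T h))\<^sup>2
      \<le> (1 - \<gamma>)\<^sup>2 * (norm h)\<^sup>2 + (\<gamma> * \<rho>)\<^sup>2 * ((norm T)\<^sup>2 * (norm h)\<^sup>2)"
    by linarith
  also have "\<dots> = ((1 - \<gamma>)\<^sup>2 + \<gamma> * (\<gamma> * (\<rho>\<^sup>2 * (norm T)\<^sup>2))) * (norm h)\<^sup>2"
    by (simp add: power2_eq_square algebra_simps)
  also have "\<dots> = (1 - \<gamma>) * (norm h)\<^sup>2"
    unfolding \<gamma>_T by (simp add: power2_eq_square algebra_simps)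
  also have "\<dots> = (sqrt (1 - \<gamma>) * norm h)\<^sup>2" using \<gamma>_bounds by (simp add: power_mult_distrib)
  finally show ?thesis by (rule power2_le_imp_le) (simp add: \<gamma>_bounds)
qed

lemma scaled_sum_op_iff:
  assumes "\<rho> \<noteq> 0"
  shows "y \<in> scaled_sum_op \<rho> A L x \<longleftrightarrow> (1/\<rho>) *\<^sub>R y - L x \<in> A x"
proof
  assume "y \<in> scaled_sum_op \<rho> A L x"
  then obtain a where "a \<in> A x" "y = \<rho> *\<^sub>R (a + L x)" unfolding scaled_sum_op_def by blast
  then show "(1/\<rho>) *\<^sub>R y - L x \<in> A x" using assms by simp
next
  assume "(1/\<rho>) *\<^sub>R y - L x \<in> A x"
  moreover have "y = \<rho> *\<^sub>R (((1/\<rho>) *\<^sub>R y - L x) + L x)" using assms by simp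
  ultimately show "y \<in> scaled_sum_op \<rho> A L x" unfolding scaled_sum_op_def by blast
qed

lemma maximal_monotone_affine_perturbation_solvable:
  fixes A :: "'b::{real_inner, complete_space} \<Rightarrow> 'b set" and T :: "'b \<Rightarrow>\<^sub>L 'b"
  assumes A: "maximal_monotone A" and \<rho>: "0 < \<rho>" and T: "\<forall>h. 0 \<le> inner h (T h)"
  shows "\<exists>x. v - x \<in> scaled_sum_op \<rho> A (\<lambda>x. T x + k) x"
proof -
  define d where "d = 1 + \<rho>\<^sup>2 * (norm T)\<^sup>2"
  define \<gamma> where "\<gamma> = 1 / d"
  have "1 \<le> d" unfolding d_def by simp
  then have \<gamma>_bounds: "0 < \<gamma>" "\<gamma> \<le> 1" unfolding \<gamma>_def by auto
  define \<mu> where "\<mu> = \<gamma> * \<rho>"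
  have \<mu>: "0 < \<mu>" unfolding \<mu>_def using \<gamma>_bounds \<rho> by simp
  obtain J where J: "\<And>w. (1/\<mu>) *\<^sub>R (w - J w) \<in> A (J w)"
    using maximal_monotone_minty[OF A \<mu>] by metis
  \<comment> \<open>The damping \<open>\<gamma>\<close> makes the explicit step for \<open>T\<close> a contraction although \<open>T\<close> is merely
      monotone; a fixed point of \<open>J \<circ> F\<close> solves the inclusion.\<close>
  define F where "F x = x - \<gamma> *\<^sub>R (x + \<rho> *\<^sub>R (T x + k) - v)" for x
  have "monotone_op A" using A unfolding maximal_monotone_def by simp
  have "dist (J (F x)) (J (F y)) \<le> sqrt (1 - \<gamma>) * dist x y" for x y
  proof -
    have "dist (J (F x)) (J (F y)) \<le> norm (F x - F y)"
      using monotone_op_resolvent_nonexpansive[OF \<open>monotone_op A\<close> \<mu> J[of "F x"] J[of "F y"]]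
      by (simp add: dist_norm)
    also have "F x - F y = (1 - \<gamma>) *\<^sub>R (x - y) - (\<gamma> * \<rho>) *\<^sub>R T (x - y)"
      unfolding F_def by (simp add: algebra_simps blinfun.diff_right)
    also have "norm \<dots> \<le> sqrt (1 - \<gamma>) * dist x y"
      using monotone_blinfun_damped_step_norm_le[OF T \<rho> \<gamma>_def[unfolded d_def]] by (simp add: dist_norm)
    finally show ?thesis .
  qed
  moreover have "sqrt (1 - \<gamma>) < 1" "0 \<le> sqrt (1 - \<gamma>)" using \<gamma>_bounds by auto
  ultimately obtain x where x: "J (F x) = x"
    using banach_fix_type[of "sqrt (1 - \<gamma>)" "\<lambda>x. J (F x)"] by blast
  have "(1/\<mu>) *\<^sub>R (F x - x) = (1/\<rho>) *\<^sub>R (v - x) - (T x + k)"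
    using \<gamma>_bounds \<rho> unfolding F_def \<mu>_def by (simp add: algebra_simps)
  then have "(1/\<rho>) *\<^sub>R (v - x) - (T x + k) \<in> A x" using J[of "F x"] unfolding x by simp
  then show ?thesis using \<rho> by (auto simp: scaled_sum_op_iff)
qed

lemma monotone_op_scaled_sum_op:
  assumes A: "monotone_op A" and L: "\<And>x y. 0 \<le> inner (x - y) (L x - L y)" and \<rho>: "0 \<le> \<rho>"
  shows "monotone_op (scaled_sum_op \<rho> A L)"
  unfolding monotone_op_def
proof (intro allI impI)
  fix x y u v assume "u \<in> scaled_sum_op \<rho> A L x" "v \<in> scaled_sum_op \<rho> A L y"
  then obtain a b where ab: "a \<in> A x" "b \<in> A y" "u = \<rho> *\<^sub>R (a + L x)" "v = \<rho> *\<^sub>R (b + L y)"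
    unfolding scaled_sum_op_def by blast
  have "0 \<le> inner (x - y) (a - b) + inner (x - y) (L x - L y)"
    using A ab L[of x y] unfolding monotone_op_def by (simp add: add_nonneg_nonneg)
  moreover have "inner (x - y) (u - v) = \<rho> * (inner (x - y) (a - b) + inner (x - y) (L x - L y))"
    unfolding ab by (simp add: algebra_simps)
  ultimately show "0 \<le> inner (x - y) (u - v)" using \<rho> by simp
qed

lemma monotone_op_resolvent_eqI:
  fixes S :: "'b::real_inner \<Rightarrow> 'b set"
  assumes S: "monotone_op S" and x: "v - x \<in> S x"
  shows "resolvent S v = x"
  unfolding resolvent_def
proof (rule the_equality)
  show "v - x \<in> S x" by (rule x)
next
  fix x' assume x': "v - x' \<in> S x'"
  have "0 \<le> inner (x' - x) ((v - x') - (v - x))"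
    using S x x' unfolding monotone_op_def by blast
  then have "inner (x' - x) (x' - x) \<le> 0"
    by (simp add: inner_diff_right inner_commute)
  then have "inner (x' - x) (x' - x) = 0" using inner_ge_zero[of "x' - x"] by linarith
  then show "x' = x" by simp
qed

lemma monotone_has_derivative_inner_nonneg:
  fixes D :: "'b::real_inner \<Rightarrow> 'b" and D' :: "'b \<Rightarrow>\<^sub>L 'b"
  assumes D: "\<forall>x y. 0 \<le> inner (x - y) (D x - D y)"
    and D': "(D has_derivative blinfun_apply D') (at u)"
  shows "0 \<le> inner h (D' h)"
proof (rule ccontr)
  assume neg: "\<not> 0 \<le> inner h (D' h)"
  define \<phi> where "\<phi> t = inner h (D (u + t *\<^sub>R h))" for t :: real
  have "((\<lambda>t::real. u + t *\<^sub>R h) has_derivative (\<lambda>t. t *\<^sub>R h)) (at 0)"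
    by (auto intro!: derivative_eq_intros)
  from has_derivative_compose[OF this] D'
  have "((\<lambda>t. D (u + t *\<^sub>R h)) has_derivative (\<lambda>t. D' (t *\<^sub>R h))) (at 0)" by simp
  then have "(\<phi> has_derivative (\<lambda>t. inner h (D' (t *\<^sub>R h)))) (at 0)"
    unfolding \<phi>_def by (rule has_derivative_inner_right)
  moreover have "(\<lambda>t. inner h (D' (t *\<^sub>R h))) = (*) (inner h (D' h))"
    by (simp add: fun_eq_iff blinfun.scaleR_right mult.commute)
  ultimately have "(\<phi> has_field_derivative inner h (D' h)) (at 0)"
    unfolding has_field_derivative_def by simp
  from DERIV_neg_dec_right[OF this] neg obtain d where "d > 0"
    and dec: "\<And>t. 0 < t \<Longrightarrow> t < d \<Longrightarrow> \<phi> t < \<phi> 0" by force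
  define t where "t = d / 2"
  have t: "0 < t" "t < d" unfolding t_def using \<open>d > 0\<close> by auto
  have "0 \<le> inner ((u + t *\<^sub>R h) - u) (D (u + t *\<^sub>R h) - D u)" using D by blast
  then have "0 \<le> t * inner h (D (u + t *\<^sub>R h) - D u)" by simp
  then have "\<phi> 0 \<le> \<phi> t" using t unfolding \<phi>_def by (simp add: zero_le_mult_iff inner_diff_right)
  with dec[OF t] show False by simp
qed

lemma linearize_eq_affine: "linearize D D' u = (\<lambda>x. D' u x + (D u - D' u u))"
  unfolding linearize_def by (simp add: blinfun.diff_right fun_eq_iff)

section \<open>The resolvent path\<close>

definition resolvent_path :: "('b::real_inner \<Rightarrow> 'b set) \<Rightarrow> ('b \<Rightarrow> 'b) \<Rightarrow> 'b \<Rightarrow> 'b \<Rightarrow> real \<Rightarrow> 'b" where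
  "resolvent_path A L u v \<rho> = resolvent (scaled_sum_op \<rho> A L) (u + \<rho> *\<^sub>R v)"

lemma xfun_eq_resolvent_path:
  "xfun A B C D D' G z w =
     resolvent_path A (linearize D D' (G z)) (G z) (w - (B (G z) + C (G z)))"
  unfolding xfun_def resolvent_path_def by (simp add: algebra_simps fun_eq_iff)

lemma resolvent_path_mem:
  fixes A :: "'b::{real_inner, complete_space} \<Rightarrow> 'b set" and T :: "'b \<Rightarrow>\<^sub>L 'b"
  assumes A: "maximal_monotone A" and T: "\<forall>h. 0 \<le> inner h (T h)" and \<rho>: "0 < \<rho>"
  shows "u + \<rho> *\<^sub>R v - resolvent_path A (\<lambda>x. T x + k) u v \<rho>
    \<in> scaled_sum_op \<rho> A (\<lambda>x. T x + k) (resolvent_path A (\<lambda>x. T x + k) u v \<rho>)"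
proof -
  obtain x where x: "u + \<rho> *\<^sub>R v - x \<in> scaled_sum_op \<rho> A (\<lambda>x. T x + k) x"
    using maximal_monotone_affine_perturbation_solvable[OF A \<rho> T] by blast
  have "monotone_op (scaled_sum_op \<rho> A (\<lambda>x. T x + k))"
    using A T \<rho> unfolding maximal_monotone_def
    by (intro monotone_op_scaled_sum_op) (auto simp flip: blinfun.diff_right)
  then have "resolvent_path A (\<lambda>x. T x + k) u v \<rho> = x"
    unfolding resolvent_path_def using x by (rule monotone_op_resolvent_eqI)
  then show ?thesis using x by simp
qed

lemma scaled_sum_op_solutions_inner_nonneg:
  fixes A :: "'b::real_inner \<Rightarrow> 'b set"
  assumes A: "monotone_op A" and L: "\<And>x y. 0 \<le> inner (x - y) (L x - L y)"
    and \<rho>: "0 < \<rho>1" "0 < \<rho>2"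
    and x1: "u + \<rho>1 *\<^sub>R v - x1 \<in> scaled_sum_op \<rho>1 A L x1"
    and x2: "u + \<rho>2 *\<^sub>R v - x2 \<in> scaled_sum_op \<rho>2 A L x2"
  shows "0 \<le> inner ((x1 - u) - (x2 - u)) (\<rho>1 *\<^sub>R (x2 - u) - \<rho>2 *\<^sub>R (x1 - u))"
proof -
  have "0 \<le> inner (x1 - x2) (((1/\<rho>1) *\<^sub>R (u + \<rho>1 *\<^sub>R v - x1) - L x1)
      - ((1/\<rho>2) *\<^sub>R (u + \<rho>2 *\<^sub>R v - x2) - L x2))"
    using A x1 x2 \<rho> unfolding monotone_op_def by (simp add: scaled_sum_op_iff)
  then have "0 \<le> inner (x1 - x2) ((1/\<rho>1) *\<^sub>R (u - x1) - (1/\<rho>2) *\<^sub>R (u - x2))"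
    using L[of x1 x2] \<rho> by (simp add: algebra_simps inner_diff_right)
  then have "0 \<le> (\<rho>1 * \<rho>2) * inner (x1 - x2) ((1/\<rho>1) *\<^sub>R (u - x1) - (1/\<rho>2) *\<^sub>R (u - x2))"
    using \<rho> by simp
  also have "\<dots> = inner ((x1 - u) - (x2 - u)) (\<rho>1 *\<^sub>R (x2 - u) - \<rho>2 *\<^sub>R (x1 - u))"
    using \<rho> by (simp add: algebra_simps inner_diff_right)
  finally show ?thesis .
qed

lemma resolvent_path_ineq:
  fixes A :: "'b::{real_inner, complete_space} \<Rightarrow> 'b set" and T :: "'b \<Rightarrow>\<^sub>L 'b" and u v k :: 'b
  assumes A: "maximal_monotone A" and T: "\<forall>h. 0 \<le> inner h (T h)" and r: "0 < r" "0 < s"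
  defines "d \<equiv> \<lambda>\<rho>. resolvent_path A (\<lambda>x. T x + k) u v \<rho> - u"
  shows "0 \<le> inner (d r - d s) (r *\<^sub>R d s - s *\<^sub>R d r)"
proof -
  have "monotone_op A" using A unfolding maximal_monotone_def by simp
  moreover have "0 \<le> inner (x - y) ((T x + k) - (T y + k))" for x y
    using T by (simp flip: blinfun.diff_right)
  ultimately show ?thesis unfolding d_def
    by (rule scaled_sum_op_solutions_inner_nonneg[OF _ _ r resolvent_path_mem[OF A T r(1)] resolvent_path_mem[OF A T r(2)]])
qed

lemma norm_le_norm_if_inner_nonneg:
  fixes d1 d2 :: "'a::real_inner"
  assumes H: "0 \<le> inner (d1 - d2) (\<rho>1 *\<^sub>R d2 - \<rho>2 *\<^sub>R d1)" and \<rho>: "0 < \<rho>1" "\<rho>1 \<le> \<rho>2"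
  shows "norm d1 \<le> norm d2"
proof (rule ccontr)
  assume "\<not> norm d1 \<le> norm d2"
  then have gt: "norm d2 < norm d1" by simp
  have "inner (d1 - d2) (\<rho>1 *\<^sub>R d2 - \<rho>2 *\<^sub>R d1)
      = (\<rho>1 + \<rho>2) * inner d1 d2 - \<rho>2 * (norm d1)\<^sup>2 - \<rho>1 * (norm d2)\<^sup>2"
    unfolding power2_norm_eq_inner by (simp add: algebra_simps inner_commute)
  also have "\<dots> \<le> (\<rho>1 + \<rho>2) * (norm d1 * norm d2) - \<rho>2 * (norm d1)\<^sup>2 - \<rho>1 * (norm d2)\<^sup>2"
    using \<rho> norm_cauchy_schwarz[of d1 d2] by (simp add: mult_left_mono)
  also have "\<dots> = (\<rho>1 * norm d2 - \<rho>2 * norm d1) * (norm d1 - norm d2)"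
    by (simp add: power2_eq_square algebra_simps)
  also have "\<dots> < 0"
  proof -
    have "\<rho>1 * norm d2 < \<rho>1 * norm d1" using gt \<rho> by simp
    also have "\<dots> \<le> \<rho>2 * norm d1" using \<rho> by (simp add: mult_right_mono)
    finally have "\<rho>1 * norm d2 - \<rho>2 * norm d1 < 0" by simp
    then show ?thesis using gt by (simp add: mult_neg_pos)
  qed
  finally show False using H by simp
qed

lemma resolvent_path_norm_mono:
  fixes A :: "'b::{real_inner, complete_space} \<Rightarrow> 'b set" and T :: "'b \<Rightarrow>\<^sub>L 'b"
  assumes A: "maximal_monotone A" and T: "\<forall>h. 0 \<le> inner h (T h)" and r: "0 < r" "r \<le> s"
  shows "norm (resolvent_path A (\<lambda>x. T x + k) u v r - u) \<le> norm (resolvent_path A (\<lambda>x. T x + k) u v s - u)"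
  using r by (intro norm_le_norm_if_inner_nonneg[OF resolvent_path_ineq[OF A T]]) auto

lemma norm_diff_le_if_inner_nonneg:
  fixes d1 d2 :: "'a::real_inner"
  assumes H: "0 \<le> inner (d1 - d2) (\<rho>1 *\<^sub>R d2 - \<rho>2 *\<^sub>R d1)" and \<rho>: "0 < \<rho>1"
  shows "\<rho>1 * norm (d1 - d2) \<le> \<bar>\<rho>1 - \<rho>2\<bar> * norm d1"
proof -
  have "\<rho>1 *\<^sub>R d2 - \<rho>2 *\<^sub>R d1 = (\<rho>1 - \<rho>2) *\<^sub>R d1 - \<rho>1 *\<^sub>R (d1 - d2)"
    by (simp add: algebra_simps)
  then have "\<rho>1 * (norm (d1 - d2))\<^sup>2 \<le> (\<rho>1 - \<rho>2) * inner (d1 - d2) d1"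
    using H by (simp add: inner_diff_right power2_norm_eq_inner)
  also have "\<dots> \<le> \<bar>\<rho>1 - \<rho>2\<bar> * \<bar>inner (d1 - d2) d1\<bar>"
    by (simp flip: abs_mult)
  also have "\<dots> \<le> \<bar>\<rho>1 - \<rho>2\<bar> * (norm (d1 - d2) * norm d1)"
    by (intro mult_left_mono Cauchy_Schwarz_ineq2) auto
  finally have "norm (d1 - d2) * (\<rho>1 * norm (d1 - d2)) \<le> norm (d1 - d2) * (\<bar>\<rho>1 - \<rho>2\<bar> * norm d1)"
    by (simp add: power2_eq_square algebra_simps)
  then show ?thesis
    using \<rho> by (cases "norm (d1 - d2) = 0") (auto simp: mult_le_cancel_left_pos)
qed

lemma continuous_on_pos_if_norm_diff_le:
  fixes f :: "real \<Rightarrow> 'a::real_normed_vector"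
  assumes bound: "\<And>r s. 0 < r \<Longrightarrow> 0 < s \<Longrightarrow> r * norm (f r - f s) \<le> \<bar>r - s\<bar> * g r"
  shows "continuous_on {0<..} f"
proof (rule continuous_at_imp_continuous_on, rule ballI)
  fix r :: real assume "r \<in> {0<..}"
  then have r: "0 < r" by simp
  have "\<forall>\<^sub>F s in at r. 0 < s"
    using order_tendstoD(1)[OF tendsto_ident_at r] by simp
  then have "\<forall>\<^sub>F s in at r. norm (f s - f r) \<le> \<bar>r - s\<bar> * g r / r"
  proof eventually_elim
    case (elim s)
    have "r * norm (f s - f r) \<le> \<bar>r - s\<bar> * g r"
      using bound[OF r elim] by (simp add: norm_minus_commute)
    then show ?case using r by (simp add: pos_le_divide_eq mult.commute)
  qed
  moreover have "((\<lambda>s. \<bar>r - s\<bar> * g r / r) \<longlongrightarrow> \<bar>r - r\<bar> * g r / r) (at r)"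
    using r by (intro tendsto_intros) auto
  then have "((\<lambda>s. \<bar>r - s\<bar> * g r / r) \<longlongrightarrow> 0) (at r)" by simp
  ultimately have "((\<lambda>s. f s - f r) \<longlongrightarrow> 0) (at r)" by (rule Lim_null_comparison)
  then show "isCont f r" unfolding isCont_def by (rule LIM_zero_cancel)
qed

lemma resolvent_path_continuous:
  fixes A :: "'b::{real_inner, complete_space} \<Rightarrow> 'b set" and T :: "'b \<Rightarrow>\<^sub>L 'b"
  assumes A: "maximal_monotone A" and T: "\<forall>h. 0 \<le> inner h (T h)"
  shows "continuous_on {0<..} (resolvent_path A (\<lambda>x. T x + k) u v)"
proof (rule continuous_on_pos_if_norm_diff_le)
  fix r s :: real assume "0 < r" "0 < s"
  from norm_diff_le_if_inner_nonneg[OF resolvent_path_ineq[OF A T this] \<open>0 < r\<close>]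
  show "r * norm (resolvent_path A (\<lambda>x. T x + k) u v r - resolvent_path A (\<lambda>x. T x + k) u v s)
      \<le> \<bar>r - s\<bar> * norm (resolvent_path A (\<lambda>x. T x + k) u v r - u)"
    by simp
qed

lemma qfun_pos:
  assumes "0 \<le> binv" "0 < dhat" "0 < r"
  shows "0 < qfun l binv dhat m u X r"
proof -
  have "0 < (binv + dhat) * r" using assms by simp
  moreover have "0 \<le> 4 * l\<^sup>2 * r\<^sup>2" "0 \<le> (m * r * norm (X r - u))\<^sup>2" by simp_all
  ultimately show ?thesis unfolding qfun_def by linarith
qed

lemma qfun_div_mono:
  assumes mono: "norm (X r - u) \<le> norm (X s - u)" and r: "0 < r" "r \<le> s"
  shows "qfun l binv dhat m u X r / r \<le> qfun l binv dhat m u X s / s"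
proof -
  have div: "qfun l binv dhat m u X t / t = 4 * l\<^sup>2 * t + (binv + dhat) + m\<^sup>2 * (t * (norm (X t - u))\<^sup>2)"
    if "0 < t" for t
    using that unfolding qfun_def by (simp add: field_simps power2_eq_square)
  have "r * (norm (X r - u))\<^sup>2 \<le> s * (norm (X s - u))\<^sup>2"
    using mono r by (intro mult_mono power_mono) auto
  then have "m\<^sup>2 * (r * (norm (X r - u))\<^sup>2) \<le> m\<^sup>2 * (s * (norm (X s - u))\<^sup>2)"
    by (rule mult_left_mono) simp
  moreover have "4 * l\<^sup>2 * r \<le> 4 * l\<^sup>2 * s" using r by (intro mult_left_mono) auto
  moreover have "0 < s" using r by simp
  ultimately show ?thesis unfolding div[OF r(1)] div[OF \<open>0 < s\<close>] by linarith
qed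

section \<open>Geometric bisection\<close>

definition brackets :: "(real \<Rightarrow> real) \<Rightarrow> real \<Rightarrow> real \<Rightarrow> real \<Rightarrow> real \<Rightarrow> real \<times> real \<Rightarrow> bool" where
  "brackets q lo hi a0 b0 t \<longleftrightarrow>
     a0 \<le> fst t \<and> fst t \<le> snd t \<and> snd t \<le> b0 \<and> q (fst t) \<le> lo \<and> hi \<le> q (snd t)"

lemma geometric_mean_between:
  fixes a b :: real
  assumes "0 < a" "a \<le> b"
  shows "a \<le> sqrt (a * b)" "sqrt (a * b) \<le> b"
proof -
  have "sqrt (a * a) \<le> sqrt (a * b)" using assms by (intro real_sqrt_le_mono mult_left_mono) auto
  then show "a \<le> sqrt (a * b)" using assms by simp
  have "sqrt (a * b) \<le> sqrt (b * b)" using assms by (intro real_sqrt_le_mono mult_right_mono) auto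
  then show "sqrt (a * b) \<le> b" using assms by simp
qed

lemma ln_geometric_mean:
  fixes a b :: real
  assumes "0 < a" "0 < b"
  shows "ln (sqrt (a * b)) = (ln a + ln b) / 2"
  using assms by (simp add: ln_sqrt ln_mult)

lemma diff_le_mult_ln_diff:
  fixes a b :: real
  assumes "0 < a" "a \<le> b"
  shows "b - a \<le> b * (ln b - ln a)"
proof -
  have "ln (a / b) \<le> a / b - 1" using assms by (intro ln_le_minus_one) simp
  then have "ln a - ln b \<le> a / b - 1" using assms by (simp add: ln_div)
  then show ?thesis using assms by (simp add: field_simps)
qed

lemma bis_init_brackets:
  assumes pos: "\<And>r. 0 < r \<Longrightarrow> 0 < q r"
    and mono: "\<And>r s. 0 < r \<Longrightarrow> r \<le> s \<Longrightarrow> q r / r \<le> q s / s"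
    and lo: "0 < lo" "lo < hi" and \<rho>0: "0 < \<rho>0" and out: "\<not> in_band q lo hi \<rho>0"
  shows "0 < fst (bis_init q lo hi \<rho>0) \<and>
    brackets q lo hi (fst (bis_init q lo hi \<rho>0)) (snd (bis_init q lo hi \<rho>0)) (bis_init q lo hi \<rho>0)"
proof (cases "q \<rho>0 < lo")
  case True
  define b where "b = \<rho>0 * hi / q \<rho>0"
  have q0: "0 < q \<rho>0" using pos \<rho>0 by simp
  have "\<rho>0 < b" unfolding b_def using True lo q0 \<rho>0 by (simp add: field_simps)
  then have "q \<rho>0 / \<rho>0 \<le> q b / b" by (intro mono \<rho>0) simp
  moreover have "q \<rho>0 / \<rho>0 = hi / b" unfolding b_def using \<rho>0 q0 lo by (simp add: field_simps)
  ultimately have "hi \<le> q b" using \<open>\<rho>0 < b\<close> \<rho>0 by (simp add: divide_le_cancel)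
  then show ?thesis using True \<open>\<rho>0 < b\<close> \<rho>0 unfolding brackets_def bis_init_def b_def by simp
next
  case False
  then have hi: "hi < q \<rho>0" using out unfolding in_band_def by auto
  define a where "a = \<rho>0 * lo / q \<rho>0"
  have q0: "0 < q \<rho>0" using pos \<rho>0 by simp
  have a: "0 < a" "a < \<rho>0" unfolding a_def using hi lo q0 \<rho>0 by (simp_all add: field_simps)
  then have "q a / a \<le> q \<rho>0 / \<rho>0" by (intro mono) auto
  moreover have "q \<rho>0 / \<rho>0 = lo / a" unfolding a_def using \<rho>0 q0 lo by (simp add: field_simps)
  ultimately have "q a \<le> lo" using a by (simp add: divide_le_cancel)
  then show ?thesis using False a hi unfolding brackets_def bis_init_def a_def by simp
qed

lemma bis_step_brackets:
  assumes a0: "0 < a0" and t: "brackets q lo hi a0 b0 t"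
    and out: "\<not> in_band q lo hi (bis_mid t)"
  shows "brackets q lo hi a0 b0 (bis_step q lo hi t) \<and>
    ln (snd (bis_step q lo hi t)) - ln (fst (bis_step q lo hi t)) = (ln (snd t) - ln (fst t)) / 2"
proof -
  obtain a b where ab: "t = (a, b)" by (cases t)
  define r where "r = sqrt (a * b)"
  have bounds: "a0 \<le> a" "a \<le> b" "b \<le> b0" "q a \<le> lo" "hi \<le> q b"
    using t unfolding ab brackets_def by auto
  have "0 < a" using a0 bounds by linarith
  have r: "a \<le> r" "r \<le> b" "ln r = (ln a + ln b) / 2"
    unfolding r_def using geometric_mean_between ln_geometric_mean \<open>0 < a\<close> bounds by auto
  have mid: "bis_mid t = r" unfolding ab bis_mid_def r_def by simp
  show ?thesis
  proof (cases "hi < q r")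
    case True
    then have "bis_step q lo hi t = (a, r)" unfolding bis_step_def mid by (simp add: ab)
    then show ?thesis using bounds r True unfolding brackets_def ab by auto
  next
    case False
    then have "q r < lo" using out unfolding mid in_band_def by auto
    then have "bis_step q lo hi t = (r, b)" using False unfolding bis_step_def mid by (simp add: ab)
    then show ?thesis using bounds r \<open>q r < lo\<close> unfolding brackets_def ab by auto
  qed
qed

lemma bis_iter_brackets:
  assumes a0: "0 < a0" and init: "bis_init q lo hi \<rho>0 = (a0, b0)" "brackets q lo hi a0 b0 (a0, b0)"
    and out: "\<forall>j<k. \<not> in_band q lo hi (bis_mid (bis_iter q lo hi \<rho>0 j))"
  shows "brackets q lo hi a0 b0 (bis_iter q lo hi \<rho>0 k) \<and>
    ln (snd (bis_iter q lo hi \<rho>0 k)) - ln (fst (bis_iter q lo hi \<rho>0 k)) = (ln b0 - ln a0) / 2 ^ k"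
  using out
proof (induction k)
  case 0
  then show ?case using init by (simp add: bis_iter_def)
next
  case (Suc k)
  then have "brackets q lo hi a0 b0 (bis_iter q lo hi \<rho>0 k)" and
    "\<not> in_band q lo hi (bis_mid (bis_iter q lo hi \<rho>0 k))" by auto
  from bis_step_brackets[OF a0 this] Suc show ?case by (simp add: bis_iter_def)
qed

lemma bis_iter_reaches_band:
  fixes q :: "real \<Rightarrow> real"
  assumes cont: "continuous_on {a0..b0} q" and lo: "lo < hi"
    and a0: "0 < a0" and init: "bis_init q lo hi \<rho>0 = (a0, b0)" "brackets q lo hi a0 b0 (a0, b0)"
  shows "\<exists>k. in_band q lo hi (bis_mid (bis_iter q lo hi \<rho>0 k))"
proof (rule ccontr)
  assume "\<nexists>k. in_band q lo hi (bis_mid (bis_iter q lo hi \<rho>0 k))"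
  then have brk: "brackets q lo hi a0 b0 (bis_iter q lo hi \<rho>0 k)"
    and width: "ln (snd (bis_iter q lo hi \<rho>0 k)) - ln (fst (bis_iter q lo hi \<rho>0 k))
       = (ln b0 - ln a0) / 2 ^ k" for k
    using bis_iter_brackets[OF a0 init] by auto
  have "uniformly_continuous_on {a0..b0} q" using cont by (simp add: compact_uniformly_continuous)
  then obtain d where "0 < d"
    and d: "\<And>x x'. x \<in> {a0..b0} \<Longrightarrow> x' \<in> {a0..b0} \<Longrightarrow> dist x' x < d \<Longrightarrow> dist (q x') (q x) < hi - lo"
    unfolding uniformly_continuous_on_def using lo by (metis diff_gt_0_iff_gt)
  obtain k :: nat where k: "b0 * (ln b0 - ln a0) / d < 2 ^ k"
    using real_arch_pow[of 2] by auto
  obtain a b where ab: "bis_iter q lo hi \<rho>0 k = (a, b)" by fastforce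
  have bounds: "a0 \<le> a" "a \<le> b" "b \<le> b0" "q a \<le> lo" "hi \<le> q b"
    using brk[of k] unfolding ab brackets_def by auto
  \<comment> \<open>Turns the halving of the logarithmic width into a bound on the width itself.\<close>
  have "b - a \<le> b * (ln b - ln a)" using a0 bounds by (intro diff_le_mult_ln_diff) auto
  also have "\<dots> \<le> b0 * (ln b - ln a)" using a0 bounds by (intro mult_right_mono) auto
  also have "\<dots> = b0 * (ln b0 - ln a0) / 2 ^ k" using width[of k] unfolding ab by simp
  also have "\<dots> < d" using k \<open>0 < d\<close> by (simp add: field_simps)
  finally have "dist (q b) (q a) < hi - lo" using d bounds by (simp add: dist_real_def)
  then show False using bounds by (simp add: dist_real_def)
qed

lemma bisection_terminates:
  fixes q :: "real \<Rightarrow> real"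
  assumes cont: "continuous_on {0<..} q" and pos: "\<And>r. 0 < r \<Longrightarrow> 0 < q r"
    and mono: "\<And>r s. 0 < r \<Longrightarrow> r \<le> s \<Longrightarrow> q r / r \<le> q s / s"
    and lo: "0 < lo" "lo < hi" and \<rho>0: "0 < \<rho>0"
  shows "\<exists>\<rho>. bisection_returns q lo hi \<rho>0 \<rho> \<and> 0 < \<rho> \<and> in_band q lo hi \<rho>"
proof (cases "in_band q lo hi \<rho>0")
  case True
  then show ?thesis unfolding bisection_returns_def using \<rho>0 by auto
next
  case out: False
  obtain a0 b0 where init: "bis_init q lo hi \<rho>0 = (a0, b0)" by fastforce
  then have a0: "0 < a0" and brk: "brackets q lo hi a0 b0 (a0, b0)"
    using bis_init_brackets[OF pos mono lo \<rho>0 out] by auto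
  let ?mid = "\<lambda>k. bis_mid (bis_iter q lo hi \<rho>0 k)"
  have "continuous_on {a0..b0} q" using a0 by (intro continuous_on_subset[OF cont]) auto
  from bis_iter_reaches_band[OF this lo(2) a0 init brk]
  have "\<exists>k. in_band q lo hi (?mid k)" .
  define n where "n = (LEAST k. in_band q lo hi (?mid k))"
  have n: "in_band q lo hi (?mid n)" "\<forall>k<n. \<not> in_band q lo hi (?mid k)"
    unfolding n_def using \<open>\<exists>k. _\<close> by (auto intro: LeastI_ex dest: not_less_Least)
  have "brackets q lo hi a0 b0 (bis_iter q lo hi \<rho>0 n)"
    using bis_iter_brackets[OF a0 init brk n(2)] by simp
  then have "0 < ?mid n" using a0 unfolding brackets_def bis_mid_def by auto
  then show ?thesis unfolding bisection_returns_def using out n by blast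
qed

theorem proposition5p8:
  fixes A :: "'b::{real_inner, complete_space} \<Rightarrow> 'b set"
    and B C D :: "'b \<Rightarrow> 'b"
    and D' :: "'b \<Rightarrow> 'b \<Rightarrow>\<^sub>L 'b"
    and G :: "'a::{real_inner, complete_space} \<Rightarrow> 'b"
    and l binv m dhat th_lo th_hi \<rho>0 :: real
    and z :: 'a and w :: 'b
  assumes A_mm: "maximal_monotone A"
    and B_mono: "\<forall>x y. 0 \<le> inner (x - y) (B x - B y)"
    and l_nonneg: "0 \<le> l"
    and B_lip: "\<forall>x y. norm (B x - B y) \<le> l * norm (x - y)"
    and binv_nonneg: "0 \<le> binv"
    and C_cocoercive: "\<forall>x y. norm (C x - C y)^2 \<le> binv * inner (x - y) (C x - C y)"
    and D_mono: "\<forall>x y. 0 \<le> inner (x - y) (D x - D y)"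
    and D_deriv: "\<forall>u. (D has_derivative blinfun_apply (D' u)) (at u)"
    and D'_lip: "\<forall>u v. norm (D' u - D' v) \<le> m * norm (u - v)"
    and G_lin: "bounded_linear G"
    and m_pos: "0 < m"
    and dhat_pos: "0 < dhat"
    and th_pos: "0 < th_lo" and th_lt: "th_lo < th_hi"
    and w_notin: "w \<notin> {a + B (G z) + C (G z) + D (G z) | a. a \<in> A (G z)}"
    and rho0_pos: "0 < \<rho>0"
  shows "\<exists>\<rho> x y.
     bisection_returns (qfun l binv dhat m (G z) (xfun A B C D D' G z w)) th_lo th_hi \<rho>0 \<rho> \<and>
     x = xfun A B C D D' G z w \<rho> \<and>
     y = (1 / \<rho>) *\<^sub>R (G z - x) + w + (B x - B (G z)) + (D x - linearize D D' (G z) x) \<and>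
     0 < \<rho> \<and>
     x = resolvent (scaled_sum_op \<rho> A (linearize D D' (G z)))
           (G z + \<rho> *\<^sub>R w - \<rho> *\<^sub>R (B (G z) + C (G z))) \<and>
     (G z + \<rho> *\<^sub>R w - \<rho> *\<^sub>R (B (G z) + C (G z))) - x
        \<in> scaled_sum_op \<rho> A (linearize D D' (G z)) x \<and>
     th_lo \<le> 4 * l^2 * \<rho>^2 + (binv + dhat) * \<rho> + (m * \<rho> * norm (x - G z))^2 \<and>
     4 * l^2 * \<rho>^2 + (binv + dhat) * \<rho> + (m * \<rho> * norm (x - G z))^2 \<le> th_hi"
proof -
  define u where "u = G z"
  define L where "L = linearize D D' u"
  define X where "X = resolvent_path A L u (w - (B u + C u))"
  have T: "\<forall>h. 0 \<le> inner h (D' u h)"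
    using monotone_has_derivative_inner_nonneg D_mono D_deriv by blast
  have L: "L = (\<lambda>x. D' u x + (D u - D' u u))" unfolding L_def by (rule linearize_eq_affine)
  have X_xfun: "xfun A B C D D' G z w = X" unfolding X_def L_def u_def by (rule xfun_eq_resolvent_path)
  define q where "q = qfun l binv dhat m u X"
  have q_cont: "continuous_on {0<..} q"
    unfolding q_def qfun_def X_def L by (intro continuous_intros resolvent_path_continuous[OF A_mm T])
  have q_pos: "\<And>r. 0 < r \<Longrightarrow> 0 < q r"
    unfolding q_def by (rule qfun_pos[OF binv_nonneg dhat_pos])
  have q_mono: "\<And>r s. 0 < r \<Longrightarrow> r \<le> s \<Longrightarrow> q r / r \<le> q s / s"
    unfolding q_def X_def L by (intro qfun_div_mono resolvent_path_norm_mono[OF A_mm T])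
  obtain \<rho> where \<rho>: "bisection_returns q th_lo th_hi \<rho>0 \<rho>" "0 < \<rho>" "in_band q th_lo th_hi \<rho>"
    using bisection_terminates[OF q_cont q_pos q_mono th_pos th_lt rho0_pos] by blast
  have "u + \<rho> *\<^sub>R (w - (B u + C u)) - X \<rho> \<in> scaled_sum_op \<rho> A L (X \<rho>)"
    unfolding X_def L by (rule resolvent_path_mem[OF A_mm T \<rho>(2)])
  then have "(G z + \<rho> *\<^sub>R w - \<rho> *\<^sub>R (B (G z) + C (G z))) - xfun A B C D D' G z w \<rho>
      \<in> scaled_sum_op \<rho> A (linearize D D' (G z)) (xfun A B C D D' G z w \<rho>)"
    unfolding X_xfun u_def L_def by (simp add: algebra_simps)
  then show ?thesis
    using \<rho> unfolding X_xfun[symmetric] q_def qfun_def in_band_def u_def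
    by (intro exI[of _ \<rho>]) (auto simp: xfun_def)
qed

end
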